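(* Let $I\subseteq R$ be a good ideal and let $(a_1,\dots,a_n),(b_1,\dots,b_n)\in\mathbb N^n$ with $a_i\le b_i$ for all $i$. Then $I_{a_1,\dots,a_n}\subseteq I_{b_1,\dots,b_n}$.
   Context: Let $\mathbb K$ be a field, $R=\mathbb K[x_1,\dots,x_n]$, $\mathfrak m=\langle x_1,\dots,x_n\rangle$, $\mathbb N=\{0,1,2,\dots\}$. A monomial $x_1^{\alpha_1}\cdots x_n^{\alpha_n}$ is identified with the point $(\alpha_1,\dots,\alpha_n)\in\mathbb N^n$. For a monomial ideal $I$, $G(I)$ denotes its (unique) minimal monomial generating set. If $I$ is an $\mathfrak m$-primary monomial ideal, then for each $i$ there is a unique $d_i\ge1$ with $x_i^{d_i}\in G(I)$; write $\mu_i=x_i^{d_i}$. For $(a_1,\dots,a_n)\in\mathbb N^n$ the box associated to $I$ is $B_{a_1,\dots,a_n}=([a_1d_1,(a_1+1)d_1]\times\cdots\times[a_nd_n,(a_n+1)d_n])\cap\mathbb N^n$; a monomial belongs to a box if its exponent vector does. An $\mathfrak m$-primary monomial ideal $I$ is called good if for every integer $l\ge1$, every element of $G(I^l)$ belongs to some box $B_{a_1,\dots,a_n}$ with $a_1+\dots+a_n=l-1$. For a good ideal $I$ and $a=(a_1,\dots,a_n)\in\mathbb N^n$, with $l=a_1+\dots+a_n+1$, define $I_{a_1,\dots,a_n}=\left\langle \frac{m}{\mu_1^{a_1}\cdots\mu_n^{a_n}} : m\in B_{a_1,\dots,a_n}\cap G(I^l)\right\rangle$. *)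

theory Defs
  imports Main
begin

text \<open>Monomials of K[x_1,...,x_n] are identified with exponent vectors in N^n,
  represented as functions nat \<Rightarrow> nat vanishing at indices \<ge> n
  (index i < n stands for the variable x_{i+1}).
  A monomial ideal is represented by the set of (exponent vectors of) monomials it contains;
  two monomial ideals are contained in one another iff these sets are.\<close>

definition mon :: "nat \<Rightarrow> (nat \<Rightarrow> nat) set" where
  "mon n = {\<alpha>. \<forall>i\<ge>n. \<alpha> i = 0}"

definition mdvd :: "(nat \<Rightarrow> nat) \<Rightarrow> (nat \<Rightarrow> nat) \<Rightarrow> bool" where
  "mdvd \<alpha> \<beta> \<longleftrightarrow> (\<forall>i. \<alpha> i \<le> \<beta> i)"

definition mgen :: "nat \<Rightarrow> (nat \<Rightarrow> nat) set \<Rightarrow> (nat \<Rightarrow> nat) set" where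
  "mgen n S = {\<beta> \<in> mon n. \<exists>\<alpha>\<in>S. mdvd \<alpha> \<beta>}"

definition monomial_ideal :: "nat \<Rightarrow> (nat \<Rightarrow> nat) set \<Rightarrow> bool" where
  "monomial_ideal n I \<longleftrightarrow> I \<subseteq> mon n \<and> (\<forall>\<alpha>\<in>I. \<forall>\<beta>\<in>mon n. mdvd \<alpha> \<beta> \<longrightarrow> \<beta> \<in> I)"

definition mingens :: "(nat \<Rightarrow> nat) set \<Rightarrow> (nat \<Rightarrow> nat) set" where
  "mingens I = {\<alpha> \<in> I. \<forall>\<beta>\<in>I. mdvd \<beta> \<alpha> \<longrightarrow> \<beta> = \<alpha>}"

fun mpow :: "nat \<Rightarrow> (nat \<Rightarrow> nat) set \<Rightarrow> nat \<Rightarrow> (nat \<Rightarrow> nat) set" where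
  "mpow n I 0 = mon n"
| "mpow n I (Suc l) = {(\<lambda>i. \<alpha> i + \<beta> i) | \<alpha> \<beta>. \<alpha> \<in> I \<and> \<beta> \<in> mpow n I l}"

definition pure :: "nat \<Rightarrow> nat \<Rightarrow> (nat \<Rightarrow> nat)" where
  "pure i d = (\<lambda>j. if j = i then d else 0)"

text \<open>A monomial ideal is m-primary iff it is proper (1 \<notin> I) and contains a pure
  power of every variable.\<close>
definition m_primary :: "nat \<Rightarrow> (nat \<Rightarrow> nat) set \<Rightarrow> bool" where
  "m_primary n I \<longleftrightarrow> monomial_ideal n I \<and> (\<lambda>_. 0) \<notin> I \<and> (\<forall>i<n. \<exists>d. pure i d \<in> I)"

definition dexp :: "(nat \<Rightarrow> nat) set \<Rightarrow> nat \<Rightarrow> nat" where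
  "dexp I i = (LEAST d. pure i d \<in> I)"

definition box :: "nat \<Rightarrow> (nat \<Rightarrow> nat) set \<Rightarrow> (nat \<Rightarrow> nat) \<Rightarrow> (nat \<Rightarrow> nat) set" where
  "box n I a = {\<alpha> \<in> mon n. \<forall>i<n. a i * dexp I i \<le> \<alpha> i \<and> \<alpha> i \<le> (a i + 1) * dexp I i}"

definition good :: "nat \<Rightarrow> (nat \<Rightarrow> nat) set \<Rightarrow> bool" where
  "good n I \<longleftrightarrow> m_primary n I \<and>
     (\<forall>l\<ge>1. \<forall>\<alpha>\<in>mingens (mpow n I l).
        \<exists>a\<in>mon n. (\<Sum>i<n. a i) = l - 1 \<and> \<alpha> \<in> box n I a)"

definition Iblock :: "nat \<Rightarrow> (nat \<Rightarrow> nat) set \<Rightarrow> (nat \<Rightarrow> nat) \<Rightarrow> (nat \<Rightarrow> nat) set" where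
  "Iblock n I a = mgen n
     {(\<lambda>i. \<alpha> i - a i * dexp I i) | \<alpha>.
        \<alpha> \<in> box n I a \<inter> mingens (mpow n I ((\<Sum>i<n. a i) + 1))}"

end

theory Submission
  imports Defs Complex_Main
begin

text \<open>
  Write \<mu>^e for the monomial with exponents e_i d_i, |e| for \<Sum>_i e_i, and call \<Sum>_i \<alpha>_i / d_i
  the weight of \<alpha>. Goodness forces every monomial g of I to have weight at least 1: the minimal
  generator of I^N dividing g^N lies in a box of level N - 1, so N - 1 \<le> N * weight g for all N.
  Hence monomials of I^L have weight at least L, and every \<mu>^e with |e| = L, having weight exactly
  L, is a minimal generator of I^L.

  The key fact is that every monomial h of I^(|c|+1) lying in B_c is divisible by a minimal generator
  of I^(|c|+1) lying in B_c. A minimal generator \<beta> dividing h can only leave B_c from below, say in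
  coordinate s. The box B_c' of the same level containing \<beta> then has c'_s < c_s, hence c'_t > c_t
  for some t, and \<mu>^(c + \<delta>_t), with \<delta>_t the t-th unit vector, is a minimal generator
  in B_c dividing h.

  For the theorem, a generator \<alpha>/\<mu>^a of I_a is shifted to h = \<alpha> \<mu>^(b-a), which lies in
  I^(|b|+1) and in B_b, and the key fact gives a generator of I_b dividing h/\<mu>^b = \<alpha>/\<mu>^a.
\<close>

lemma mdvd_trans: "mdvd \<alpha> \<beta> \<Longrightarrow> mdvd \<beta> \<gamma> \<Longrightarrow> mdvd \<alpha> \<gamma>"
  unfolding mdvd_def using le_trans by blast

lemma mon_eqI:
  assumes "\<alpha> \<in> mon n" "\<beta> \<in> mon n" "\<And>i. i < n \<Longrightarrow> \<alpha> i = \<beta> i"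
  shows "\<alpha> = \<beta>"
proof
  fix i
  show "\<alpha> i = \<beta> i"
    using assms by (cases "i < n") (auto simp: mon_def)
qed

lemma mon_mdvd_neq:
  assumes "\<alpha> \<in> mon n" "\<beta> \<in> mon n" "mdvd \<alpha> \<beta>" "\<alpha> \<noteq> \<beta>"
  obtains i where "i < n" "\<alpha> i < \<beta> i"
proof -
  have "\<exists>i<n. \<alpha> i \<noteq> \<beta> i"
    using mon_eqI[OF assms(1,2)] assms(4) by blast
  with assms(3) show ?thesis
    using that le_neq_implies_less unfolding mdvd_def by blast
qed

lemma mon_add: "\<alpha> \<in> mon n \<Longrightarrow> \<beta> \<in> mon n \<Longrightarrow> (\<lambda>i. \<alpha> i + \<beta> i) \<in> mon n"
  unfolding mon_def by simp

lemma sum_eq_less_imp_greater: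
  fixes f g :: "'a \<Rightarrow> 'b::{ordered_cancel_comm_monoid_add, linorder}"
  assumes "finite A" "sum f A = sum g A" "s \<in> A" "f s < g s"
  shows "\<exists>t\<in>A. g t < f t"
proof (rule ccontr)
  assume "\<not> ?thesis"
  then have "sum f A < sum g A"
    using assms by (intro sum_strict_mono_ex1) (auto simp: not_less)
  with assms(2) show False by simp
qed

lemma ex_mingens_mdvd:
  assumes "S \<subseteq> mon n" "x \<in> S"
  shows "\<exists>\<beta>\<in>mingens S. mdvd \<beta> x"
  using assms(2)
proof (induction "\<Sum>i<n. x i" arbitrary: x rule: less_induct)
  case less
  show ?case
  proof (cases "x \<in> mingens S")
    case True
    then show ?thesis unfolding mdvd_def by auto
  next
    case False
    then obtain \<beta> where \<beta>: "\<beta> \<in> S" "mdvd \<beta> x" "\<beta> \<noteq> x"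
      using less.prems unfolding mingens_def by auto
    moreover have "\<beta> \<in> mon n" "x \<in> mon n"
      using assms(1) \<beta>(1) less.prems by auto
    ultimately obtain i where "i < n" "\<beta> i < x i"
      using mon_mdvd_neq by metis
    then have "(\<Sum>i<n. \<beta> i) < (\<Sum>i<n. x i)"
      using \<beta>(2) unfolding mdvd_def by (intro sum_strict_mono_ex1) auto
    then obtain \<gamma> where "\<gamma> \<in> mingens S" "mdvd \<gamma> \<beta>"
      using less.hyps \<beta>(1) by blast
    then show ?thesis using \<beta>(2) mdvd_trans by blast
  qed
qed

lemma mpow_SucI: "\<alpha> \<in> I \<Longrightarrow> \<beta> \<in> mpow n I l \<Longrightarrow> (\<lambda>i. \<alpha> i + \<beta> i) \<in> mpow n I (Suc l)"
  by auto

lemma mpow_SucE: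
  assumes "x \<in> mpow n I (Suc l)"
  obtains \<alpha> \<beta> where "x = (\<lambda>i. \<alpha> i + \<beta> i)" "\<alpha> \<in> I" "\<beta> \<in> mpow n I l"
  using assms by auto

declare mpow.simps(2) [simp del]

lemma mpow_subset_mon: "monomial_ideal n I \<Longrightarrow> mpow n I l \<subseteq> mon n"
proof (induction l)
  case (Suc l)
  then show ?case
    by (auto elim!: mpow_SucE intro!: mon_add simp: monomial_ideal_def)
qed simp

lemma mpow_mon_add: "x \<in> mon n \<Longrightarrow> y \<in> mpow n I m \<Longrightarrow> (\<lambda>i. x i + y i) \<in> mpow n I m"
proof (induction m arbitrary: y)
  case 0
  then show ?case by (simp add: mon_add)
next
  case (Suc m)
  then obtain \<alpha> \<beta> where y: "y = (\<lambda>i. \<alpha> i + \<beta> i)" "\<alpha> \<in> I" "\<beta> \<in> mpow n I m"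
    by (auto elim: mpow_SucE)
  then have "(\<lambda>i. x i + y i) = (\<lambda>i. \<alpha> i + (x i + \<beta> i))"
    by (simp add: add.left_commute)
  with y Suc show ?case by (simp add: mpow_SucI)
qed

lemma mpow_add: "x \<in> mpow n I l \<Longrightarrow> y \<in> mpow n I m \<Longrightarrow> (\<lambda>i. x i + y i) \<in> mpow n I (l + m)"
proof (induction l arbitrary: x)
  case 0
  then show ?case by (simp add: mpow_mon_add)
next
  case (Suc l)
  then obtain \<alpha> \<beta> where x: "x = (\<lambda>i. \<alpha> i + \<beta> i)" "\<alpha> \<in> I" "\<beta> \<in> mpow n I l"
    by (auto elim: mpow_SucE)
  then have "(\<lambda>i. x i + y i) = (\<lambda>i. \<alpha> i + (\<beta> i + y i))"
    by (simp add: add.assoc)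
  with x Suc show ?case by (simp add: mpow_SucI)
qed

lemma mpow_scale: "g \<in> I \<Longrightarrow> (\<lambda>i. N * g i) \<in> mpow n I N"
proof (induction N)
  case 0
  show ?case by (simp add: mon_def)
next
  case (Suc N)
  have "(\<lambda>i. Suc N * g i) = (\<lambda>i. g i + N * g i)" by auto
  then show ?case using Suc by (simp add: mpow_SucI)
qed

lemma pure_dexp_mem: "m_primary n I \<Longrightarrow> i < n \<Longrightarrow> pure i (dexp I i) \<in> I"
  unfolding m_primary_def dexp_def by (auto intro: LeastI_ex)

lemma dexp_pos:
  assumes "m_primary n I" "i < n"
  shows "0 < dexp I i"
proof (rule ccontr)
  assume "\<not> 0 < dexp I i"
  then have "pure i (dexp I i) = (\<lambda>_. 0)" unfolding pure_def by auto
  with pure_dexp_mem[OF assms] assms(1) show False unfolding m_primary_def by auto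
qed

lemma pure_powers_mem_mpow:
  assumes "m_primary n I" "e \<in> mon n"
  shows "(\<lambda>i. e i * dexp I i) \<in> mpow n I (\<Sum>i<n. e i)"
proof -
  have "(\<lambda>i. if i < k then e i * dexp I i else 0) \<in> mpow n I (\<Sum>i<k. e i)" if "k \<le> n" for k
    using that
  proof (induction k)
    case 0
    show ?case by (simp add: mon_def)
  next
    case (Suc k)
    have "(\<lambda>i. e k * pure k (dexp I k) i) \<in> mpow n I (e k)"
      using Suc.prems by (intro mpow_scale pure_dexp_mem[OF assms(1)]) simp
    moreover have "(\<lambda>i. if i < Suc k then e i * dexp I i else 0)
        = (\<lambda>i. (if i < k then e i * dexp I i else 0) + e k * pure k (dexp I k) i)"
      by (rule ext) (auto simp: pure_def less_Suc_eq)
    ultimately show ?case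
      using Suc mpow_add by fastforce
  qed
  moreover have "(\<lambda>i. if i < n then e i * dexp I i else 0) = (\<lambda>i. e i * dexp I i)"
    using assms(2) by (auto simp: mon_def)
  ultimately show ?thesis by force
qed

lemma box_shift:
  assumes "\<alpha> \<in> box n I a" "e \<in> mon n"
  shows "(\<lambda>i. \<alpha> i + e i * dexp I i) \<in> box n I (\<lambda>i. a i + e i)"
  using assms by (auto simp: box_def mon_def algebra_simps)

definition weight :: "nat \<Rightarrow> (nat \<Rightarrow> nat) set \<Rightarrow> (nat \<Rightarrow> nat) \<Rightarrow> real" where
  "weight n I x = (\<Sum>i<n. real (x i) / real (dexp I i))"

lemma weight_add: "weight n I (\<lambda>i. x i + y i) = weight n I x + weight n I y"
  unfolding weight_def by (simp add: sum.distrib add_divide_distrib)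

lemma weight_pure_powers:
  "m_primary n I \<Longrightarrow> weight n I (\<lambda>i. e i * dexp I i) = real (\<Sum>i<n. e i)"
  unfolding weight_def by (simp add: dexp_pos)

lemma weight_strict_mono:
  assumes "m_primary n I" "\<alpha> \<in> mon n" "\<beta> \<in> mon n" "mdvd \<alpha> \<beta>" "\<alpha> \<noteq> \<beta>"
  shows "weight n I \<alpha> < weight n I \<beta>"
proof -
  obtain i where i: "i < n" "\<alpha> i < \<beta> i"
    using mon_mdvd_neq[OF assms(2-5)] .
  show ?thesis
    unfolding weight_def
  proof (rule sum_strict_mono_ex1)
    show "\<forall>j\<in>{..<n}. real (\<alpha> j) / real (dexp I j) \<le> real (\<beta> j) / real (dexp I j)"
      using assms(4) unfolding mdvd_def by (auto intro: divide_right_mono)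
    show "\<exists>j\<in>{..<n}. real (\<alpha> j) / real (dexp I j) < real (\<beta> j) / real (dexp I j)"
      using i dexp_pos[OF assms(1) i(1)] by (auto intro!: bexI[of _ i] divide_strict_right_mono)
  qed simp
qed

lemma good_mingens_in_box:
  "good n I \<Longrightarrow> 1 \<le> l \<Longrightarrow> \<alpha> \<in> mingens (mpow n I l) \<Longrightarrow> \<exists>a. (\<Sum>i<n. a i) = l - 1 \<and> \<alpha> \<in> box n I a"
  unfolding good_def by blast

lemma good_weight_ge_1:
  assumes gd: "good n I" and g: "g \<in> I"
  shows "1 \<le> weight n I g"
proof -
  have mp: "m_primary n I" using gd unfolding good_def by auto
  then have mi: "monomial_ideal n I" unfolding m_primary_def by auto
  have bound: "real N - 1 \<le> real N * weight n I g" if N: "N \<ge> 1" for N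
  proof -
    obtain \<beta> where \<beta>: "\<beta> \<in> mingens (mpow n I N)" "mdvd \<beta> (\<lambda>i. N * g i)"
      using ex_mingens_mdvd[OF mpow_subset_mon[OF mi] mpow_scale[OF g]] by blast
    then obtain a where a: "(\<Sum>i<n. a i) = N - 1" "\<beta> \<in> box n I a"
      using good_mingens_in_box[OF gd N] by blast
    have "real N - 1 = (\<Sum>i<n. real (a i))"
      using a(1) N by (simp flip: of_nat_sum)
    also have "\<dots> \<le> (\<Sum>i<n. real (N * g i) / real (dexp I i))"
    proof (rule sum_mono)
      fix i assume "i \<in> {..<n}"
      then have "a i * dexp I i \<le> N * g i" "0 < dexp I i"
        using a(2) \<beta>(2) dexp_pos[OF mp] unfolding box_def mdvd_def by (auto intro: le_trans)
      then show "real (a i) \<le> real (N * g i) / real (dexp I i)"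
        by (simp add: field_simps flip: of_nat_mult)
    qed
    also have "\<dots> = real N * weight n I g"
      unfolding weight_def by (simp add: sum_distrib_left)
    finally show ?thesis .
  qed
  show ?thesis
  proof (rule ccontr)
    assume "\<not> ?thesis"
    then have pos: "0 < 1 - weight n I g" by simp
    obtain N :: nat where N: "1 / (1 - weight n I g) < real N"
      using reals_Archimedean2 by blast
    then have "0 < real N"
      using pos by (smt (verit) zero_less_divide_1_iff)
    then have "N \<ge> 1" by simp
    have "1 < real N * (1 - weight n I g)"
      using N pos by (simp add: divide_less_eq)
    then have "1 < real N - real N * weight n I g"
      by (simp add: right_diff_distrib)
    with bound[OF \<open>N \<ge> 1\<close>] show False by linarith
  qed
qed

lemma good_weight_mpow: "good n I \<Longrightarrow> y \<in> mpow n I L \<Longrightarrow> real L \<le> weight n I y"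
proof (induction L arbitrary: y)
  case 0
  then show ?case unfolding weight_def by (simp add: sum_nonneg)
next
  case (Suc L)
  then obtain \<alpha> \<beta> where "y = (\<lambda>i. \<alpha> i + \<beta> i)" "\<alpha> \<in> I" "\<beta> \<in> mpow n I L"
    by (auto elim: mpow_SucE)
  with Suc good_weight_ge_1 show ?case by (force simp: weight_add)
qed

lemma good_pure_powers_mingens:
  assumes gd: "good n I" and e: "e \<in> mon n"
  shows "(\<lambda>i. e i * dexp I i) \<in> mingens (mpow n I (\<Sum>i<n. e i))"
proof -
  have mp: "m_primary n I" using gd unfolding good_def by auto
  then have mi: "monomial_ideal n I" unfolding m_primary_def by auto
  define z where "z = (\<lambda>i. e i * dexp I i)"
  have z: "z \<in> mpow n I (\<Sum>i<n. e i)"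
    unfolding z_def using pure_powers_mem_mpow[OF mp e] .
  have "\<beta> = z" if "\<beta> \<in> mpow n I (\<Sum>i<n. e i)" "mdvd \<beta> z" for \<beta>
  proof (rule ccontr)
    assume "\<beta> \<noteq> z"
    then have "weight n I \<beta> < weight n I z"
      using that z mpow_subset_mon[OF mi] by (intro weight_strict_mono[OF mp]) auto
    with good_weight_mpow[OF gd that(1)] show False
      unfolding z_def weight_pure_powers[OF mp] by simp
  qed
  with z show ?thesis unfolding mingens_def z_def by blast
qed

lemma good_mingens_leave_box_below:
  assumes gd: "good n I"
    and \<beta>: "\<beta> \<in> mingens (mpow n I ((\<Sum>i<n. c i) + 1))"
    and s: "s < n" "\<beta> s < c s * dexp I s"
  shows "\<exists>t<n. (c t + 1) * dexp I t \<le> \<beta> t"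
proof -
  obtain c' where c': "(\<Sum>i<n. c' i) = (\<Sum>i<n. c i)" "\<beta> \<in> box n I c'"
    using good_mingens_in_box[OF gd _ \<beta>] by auto
  then have "c' s * dexp I s \<le> \<beta> s"
    using s(1) unfolding box_def by auto
  with s(2) have "c' s < c s"
    by (meson le_less_trans mult_less_cancel2)
  then obtain t where "t < n" "c t < c' t"
    using sum_eq_less_imp_greater[of "{..<n}" c' c s] c'(1) s(1) by auto
  moreover have "(c t + 1) * dexp I t \<le> c' t * dexp I t"
    using \<open>c t < c' t\<close> by (intro mult_le_mono1) simp
  ultimately show ?thesis using c'(2) unfolding box_def by (auto intro: le_trans)
qed

lemma box_above_pure_powers_mdvd:
  assumes "c \<in> mon n" "h \<in> box n I c" "t < n" "(c t + 1) * dexp I t \<le> h t"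
  shows "mdvd (\<lambda>i. (c i + (if i = t then 1 else 0)) * dexp I i) h"
  unfolding mdvd_def
proof
  fix i
  show "(c i + (if i = t then 1 else 0)) * dexp I i \<le> h i"
    using assms by (cases "i < n") (auto simp: box_def mon_def)
qed

lemma good_box_mingens_mdvd:
  assumes gd: "good n I" and c: "c \<in> mon n"
    and h: "h \<in> mpow n I ((\<Sum>i<n. c i) + 1)" "h \<in> box n I c"
  shows "\<exists>\<beta> \<in> box n I c \<inter> mingens (mpow n I ((\<Sum>i<n. c i) + 1)). mdvd \<beta> h"
proof -
  have mp: "m_primary n I" using gd unfolding good_def by auto
  then have mi: "monomial_ideal n I" unfolding m_primary_def by auto
  obtain \<beta> where \<beta>: "\<beta> \<in> mingens (mpow n I ((\<Sum>i<n. c i) + 1))" "mdvd \<beta> h"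
    using ex_mingens_mdvd[OF mpow_subset_mon[OF mi] h(1)] by blast
  show ?thesis
  proof (cases "\<forall>i<n. c i * dexp I i \<le> \<beta> i")
    case True
    have "\<beta> \<in> mon n" using \<beta>(1) mpow_subset_mon[OF mi] unfolding mingens_def by auto
    with True \<beta>(2) h(2) have "\<beta> \<in> box n I c"
      unfolding box_def mdvd_def by (auto intro: le_trans)
    with \<beta> show ?thesis by blast
  next
    case False
    then obtain t where t: "t < n" "(c t + 1) * dexp I t \<le> \<beta> t"
      using good_mingens_leave_box_below[OF gd \<beta>(1)] by (auto simp: not_le)
    define e where "e = (\<lambda>i. c i + (if i = t then 1 else 0))"
    have e: "e \<in> mon n" "(\<Sum>i<n. e i) = (\<Sum>i<n. c i) + 1"
      using c t(1) by (auto simp: e_def mon_def sum.distrib)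
    have ht: "(c t + 1) * dexp I t \<le> h t"
      using t(2) \<beta>(2) unfolding mdvd_def by (auto intro: le_trans)
    define z where "z = (\<lambda>i. e i * dexp I i)"
    have "z \<in> mingens (mpow n I ((\<Sum>i<n. c i) + 1))"
      using good_pure_powers_mingens[OF gd e(1)] unfolding z_def e(2) .
    moreover have "z \<in> box n I c"
      using e(1) by (auto simp: box_def z_def e_def mon_def)
    moreover have "mdvd z h"
      unfolding z_def e_def using c h(2) t(1) ht by (rule box_above_pure_powers_mdvd)
    ultimately show ?thesis by blast
  qed
qed

theorem mainTheorem5:
  fixes n :: nat and I :: "(nat \<Rightarrow> nat) set" and a b :: "nat \<Rightarrow> nat"
  assumes "good n I"
    and "a \<in> mon n" and "b \<in> mon n"
    and "\<forall>i<n. a i \<le> b i"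
  shows "Iblock n I a \<subseteq> Iblock n I b"
proof
  fix \<gamma> assume "\<gamma> \<in> Iblock n I a"
  then obtain \<alpha> where \<gamma>: "\<gamma> \<in> mon n" "mdvd (\<lambda>i. \<alpha> i - a i * dexp I i) \<gamma>"
    and \<alpha>: "\<alpha> \<in> box n I a" "\<alpha> \<in> mpow n I ((\<Sum>i<n. a i) + 1)"
    unfolding Iblock_def mgen_def mingens_def by blast
  have mp: "m_primary n I" using assms(1) unfolding good_def by auto
  define e where "e = (\<lambda>i. b i - a i)"
  have e: "e \<in> mon n" using assms(3) unfolding mon_def e_def by auto
  have b: "b = (\<lambda>i. a i + e i)"
    using assms(2-4) mon_add[OF assms(2) e] by (intro mon_eqI) (auto simp: e_def)
  define h where "h = (\<lambda>i. \<alpha> i + e i * dexp I i)"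
  have "h \<in> mpow n I ((\<Sum>i<n. b i) + 1)"
    using mpow_add[OF \<alpha>(2) pure_powers_mem_mpow[OF mp e]] by (simp add: h_def b sum.distrib)
  moreover have "h \<in> box n I b"
    unfolding h_def b by (rule box_shift[OF \<alpha>(1) e])
  ultimately obtain \<beta> where \<beta>: "\<beta> \<in> box n I b \<inter> mingens (mpow n I ((\<Sum>i<n. b i) + 1))"
      "mdvd \<beta> h"
    using good_box_mingens_mdvd[OF assms(1,3)] by blast
  have "h i - b i * dexp I i = \<alpha> i - a i * dexp I i" for i
    by (simp add: h_def b add_mult_distrib)
  then have "mdvd (\<lambda>i. \<beta> i - b i * dexp I i) \<gamma>"
    using \<beta>(2) \<gamma>(2) unfolding mdvd_def by (metis diff_le_mono le_trans)
  with \<beta>(1) \<gamma>(1) show "\<gamma> \<in> Iblock n I b"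
    unfolding Iblock_def mgen_def by blast
qed

end
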